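(* In the sigmoid setting with algorithm RCDB-S described in the context, suppose the events $\mathcal E_1=\{\|\theta^*-\theta_t\|_{\Sigma_t}\le\beta_t\ \forall t\}$ and $\mathcal E_2=\{\|\theta^*-\theta_t\|_{\Lambda_t}\le\tilde\beta_t\ \forall t\}$ hold. Then for every $t\in[T]$: (i) $v_t\le\dot\sigma\big((\phi(x_t,a_t)-\phi(x_t,b_t))^\top\theta^*\big)$; and (ii) the per-round regret satisfies $$2r^*(x_t,a_t^* )-r^*(x_t,a_t)-r^*(x_t,b_t)\le2\tilde\beta_t\|\phi(x_t,a_t)-\phi(x_t,b_t)\|_{\Lambda_t^{-1}}.$$
   Context: Sigmoid setting. Context set $\mathcal X$, action set $\mathcal A$, known feature map $\phi:\mathcal X\times\mathcal A\to\mathbb R^d$ with $\|\phi(x,a)\|_2\le1$; unknown $\theta^*$ with $\|\theta^*\|_2\le B$; reward $r^*(x,a)=\langle\theta^*,\phi(x,a)\rangle$; $a_t^*=\arg\max_a r^*(x_t,a)$. Link function $\sigma(z)=1/(1+e^{-z})$, $\dot\sigma(z)=e^{-z}/(1+e^{-z})^2$, and $\kappa>0$ is a constant with $\dot\sigma(\langle\phi(x,a)-\phi(x,b),\theta\rangle)\ge\kappa$ for all $x,a,b$ and $\|\theta\|_2\le B$. In each round $t$: context $x_t$ revealed, agent picks $a_t,b_t$; a true label $l_t\in\{0,1\}$ with $\Pr(l_t=1\mid\text{past},x_t,a_t,b_t)=\sigma(\langle\phi(x_t,a_t)-\phi(x_t,b_t),\theta^*\rangle)$; an adversary seeing $x_t,a_t,b_t,l_t$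 chooses $c_t\in\{0,1\}$; agent observes $o_t=l_t$ if $c_t=0$, $o_t=1-l_t$ if $c_t=1$. Notation $\phi_i=\phi(x_i,a_i)-\phi(x_i,b_i)$, $\|v\|_M=\sqrt{v^\top Mv}$. Algorithm RCDB-S (parameters $\alpha>0$, $\lambda>0$, $\kappa$, positive radii $\beta_t,\tilde\beta_t$): for $t=1,\dots,T$: (1) $\Sigma_t=\lambda I+\sum_{i=1}^{t-1}w_i\kappa\,\phi_i\phi_i^\top$ and $\Lambda_t=\lambda I+\sum_{i=1}^{t-1}w_iv_i\,\phi_i\phi_i^\top$; (2) $\theta_t$ solves $\lambda\theta+\sum_{i=1}^{t-1}w_i(\sigma(\phi_i^\top\theta)-o_i)\phi_i=0$; (3) observe $x_t$, choose $(a_t,b_t)\in\arg\max_{a,b}\{(\phi(x_t,a)+\phi(x_t,b))^\top\theta_t+\tilde\beta_t\|\phi(x_t,a)-\phi(x_t,b)\|_{\Lambda_t^{-1}}\}$; (4) observe $o_t$, set $w_t=\min\{1,\alpha/\|\phi_t\|_{\Sigma_t^{-1}}\}$; (5) set $\hat\Delta_t=|\phi_t^\top\theta_t|+\beta_t\|\phi_t\|_{\Sigma_t^{-1}}$ and $v_t=\max\{\kappa,\dot\sigma(\hat\Delta_t)\}$. *)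

theory Defs
  imports "HOL-Analysis.Analysis"
begin

definition sigmoid :: "real \<Rightarrow> real" where
  "sigmoid z = 1 / (1 + exp (- z))"

definition dsigmoid :: "real \<Rightarrow> real" where
  "dsigmoid z = exp (- z) / (1 + exp (- z))^2"

definition outer :: "real^'n \<Rightarrow> real^'n^'n" where
  "outer u = (\<chi> i j. u $ i * u $ j)"

definition mnorm :: "real^'n^'n \<Rightarrow> real^'n \<Rightarrow> real" where
  "mnorm M u = sqrt (u \<bullet> (M *v u))"

end

theory Submission
  imports Defs
begin

(* Both claims follow from the dual-norm Cauchy-Schwarz inequality
   p \<bullet> z \<le> ||p||_(M^-1) ||z||_M for the positive definite regularized Gram matrices
   \<Sigma> t and \<Lambda> t. For u = \<phi> (a t) - \<phi> (b t), E1 then gives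
   |u \<bullet> \<theta>s - u \<bullet> \<theta> t| \<le> \<beta> t ||u||_(\<Sigma> t^-1), so the optimistic argument of dsigmoid
   in v t dominates |u \<bullet> \<theta>s|, and dsigmoid decreases in |z|.
   For the regret, compare the chosen pair (a t, b t) with the pairs (astar t, b t) and
   (a t, astar t): the optimistic choice rule together with E2 bounds each half of the regret
   by \<beta>t t ||\<phi> (a t) - \<phi> (b t)||_(\<Lambda> t^-1). *)

definition sym_pos_def :: "real^'n^'n \<Rightarrow> bool" where
  "sym_pos_def M \<longleftrightarrow> transpose M = M \<and> (\<forall>y. y \<noteq> 0 \<longrightarrow> 0 < y \<bullet> (M *v y))"

lemma outer_mult_vec: "outer u *v y = (u \<bullet> y) *\<^sub>R u"
  by (simp add: outer_def matrix_vector_mult_def vec_eq_iff inner_vec_def sum_distrib_left mult_ac)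

lemma sum_matrix_vector_mult:
  fixes f :: "'i \<Rightarrow> real^'n^'m"
  shows "(\<Sum>i\<in>I. f i) *v z = (\<Sum>i\<in>I. f i *v z)"
  by (simp add: vec_eq_iff matrix_vector_mult_def sum_component sum_distrib_right flip: sum.swap[of _ I])

lemma inner_regularized_gram:
  "y \<bullet> ((lam *\<^sub>R mat 1 + (\<Sum>i\<in>I. c i *\<^sub>R outer (u i))) *v z)
     = lam * (y \<bullet> z) + (\<Sum>i\<in>I. c i * (u i \<bullet> y) * (u i \<bullet> z))"
  by (simp add: matrix_vector_mult_add_rdistrib sum_matrix_vector_mult outer_mult_vec
      inner_add_right inner_sum_right inner_commute mult_ac flip: scaleR_matrix_vector_assoc)

lemma regularized_gram_sym_pos_def:
  fixes u :: "'i \<Rightarrow> real^'n"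
  assumes "lam > 0" and "\<And>i. i \<in> I \<Longrightarrow> c i \<ge> 0"
  shows "sym_pos_def (lam *\<^sub>R mat 1 + (\<Sum>i\<in>I. c i *\<^sub>R outer (u i)))" (is "sym_pos_def ?M")
  unfolding sym_pos_def_def
proof (intro conjI allI impI)
  show "transpose ?M = ?M"
    by (simp add: vec_eq_iff transpose_def outer_def mat_def mult.commute)
  fix y :: "real^'n" assume "y \<noteq> 0"
  have "0 < lam * (y \<bullet> y)" using assms(1) \<open>y \<noteq> 0\<close> by simp
  also have "\<dots> \<le> lam * (y \<bullet> y) + (\<Sum>i\<in>I. c i * (u i \<bullet> y) * (u i \<bullet> y))"
    using assms(2) by (simp add: sum_nonneg mult.assoc)
  finally show "0 < y \<bullet> (?M *v y)"
    by (simp add: inner_regularized_gram)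
qed

lemma sym_pos_def_inner_commute:
  assumes "sym_pos_def M"
  shows "y \<bullet> (M *v z) = z \<bullet> (M *v y)"
  by (metis assms dot_lmul_matrix inner_commute sym_pos_def_def vector_transpose_matrix)

lemma sym_pos_def_nonneg:
  assumes "sym_pos_def M"
  shows "0 \<le> y \<bullet> (M *v y)"
  using assms by (cases "y = 0") (auto simp: sym_pos_def_def less_imp_le)

lemma sym_pos_def_matrix_inv_right:
  assumes "sym_pos_def M"
  shows "M ** matrix_inv M = mat 1"
proof -
  have "M *v y = 0 \<Longrightarrow> y = 0" for y
    using assms by (auto simp: sym_pos_def_def)
  then have "invertible M"
    using matrix_left_invertible_ker invertible_left_inverse by blast
  then show ?thesis
    unfolding invertible_def matrix_inv_def by (metis (mono_tags, lifting) someI_ex)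
qed

lemma sym_pos_def_cauchy_schwarz:
  assumes "sym_pos_def M"
  shows "(y \<bullet> (M *v z))\<^sup>2 \<le> (y \<bullet> (M *v y)) * (z \<bullet> (M *v z))"
proof (cases "z = 0")
  case False
  define q where "q p r = p \<bullet> (M *v r)" for p r
  define s where "s = - q y z / q z z"
  have pos: "q z z > 0" using assms False by (simp add: q_def sym_pos_def_def)
  have "0 \<le> q (y + s *\<^sub>R z) (y + s *\<^sub>R z)"
    unfolding q_def by (rule sym_pos_def_nonneg[OF assms])
  also have "\<dots> = q y y + 2 * s * q y z + s\<^sup>2 * q z z"
    using sym_pos_def_inner_commute[OF assms, of z y]
    by (simp add: q_def algebra_simps inner_add_left inner_add_right power2_eq_square)
  also have "\<dots> = q y y - (q y z)\<^sup>2 / q z z"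
    using pos by (simp add: s_def field_simps power2_eq_square)
  finally show ?thesis
    using pos by (simp add: q_def field_simps)
qed simp

lemma inner_le_mnorm_matrix_inv_mult_mnorm:
  assumes "sym_pos_def M"
  shows "p \<bullet> z \<le> mnorm (matrix_inv M) p * mnorm M z"
    and "0 \<le> mnorm (matrix_inv M) p"
proof -
  define y where "y = matrix_inv M *v p"
  have "M *v y = p"
    by (simp add: y_def matrix_vector_mul_assoc sym_pos_def_matrix_inv_right[OF assms])
  then have pz: "p \<bullet> z = y \<bullet> (M *v z)" and yy: "y \<bullet> (M *v y) = p \<bullet> (matrix_inv M *v p)"
    using sym_pos_def_inner_commute[OF assms, of z y] by (simp_all add: y_def inner_commute)
  have "\<bar>p \<bullet> z\<bar> \<le> sqrt ((y \<bullet> (M *v y)) * (z \<bullet> (M *v z)))"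
    unfolding pz by (rule real_le_rsqrt) (simp add: sym_pos_def_cauchy_schwarz[OF assms])
  then show "p \<bullet> z \<le> mnorm (matrix_inv M) p * mnorm M z"
    by (simp add: mnorm_def yy real_sqrt_mult)
  show "0 \<le> mnorm (matrix_inv M) p"
    using sym_pos_def_nonneg[OF assms, of y] by (simp add: mnorm_def yy)
qed

lemma mnorm_uminus: "mnorm M (- p) = mnorm M p"
  using matrix_vector_mult_diff_distrib[of M 0 p] by (simp add: mnorm_def)

lemma ellipsoid_inner_le:
  assumes "sym_pos_def M" and "mnorm M (\<theta>s - \<theta>) \<le> \<beta>"
  shows "p \<bullet> (\<theta>s - \<theta>) \<le> \<beta> * mnorm (matrix_inv M) p"
proof -
  note cs = inner_le_mnorm_matrix_inv_mult_mnorm[OF assms(1)]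
  have "p \<bullet> (\<theta>s - \<theta>) \<le> mnorm (matrix_inv M) p * mnorm M (\<theta>s - \<theta>)" by (rule cs(1))
  also have "\<dots> \<le> mnorm (matrix_inv M) p * \<beta>" using assms(2) cs(2) by (rule mult_left_mono)
  finally show ?thesis by (simp add: mult.commute)
qed

lemma ellipsoid_abs_inner_diff_le:
  assumes "sym_pos_def M" and "mnorm M (\<theta>s - \<theta>) \<le> \<beta>"
  shows "\<bar>p \<bullet> \<theta>s - p \<bullet> \<theta>\<bar> \<le> \<beta> * mnorm (matrix_inv M) p"
  using ellipsoid_inner_le[OF assms, of p] ellipsoid_inner_le[OF assms, of "- p"]
  by (simp add: mnorm_uminus inner_diff_right)

lemma dsigmoid_eq_cosh: "dsigmoid z = 1 / (2 * cosh z + 2)"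
proof -
  have e: "exp z * exp (- z) = 1" by (simp add: exp_minus)
  have "dsigmoid z = (exp (- z) * exp z) / ((1 + exp (- z))\<^sup>2 * exp z)"
    unfolding dsigmoid_def by simp
  also have "(1 + exp (- z))\<^sup>2 * exp z = exp z + 2 * (exp z * exp (- z)) + (exp z * exp (- z)) * exp (- z)"
    by (simp add: power2_eq_square algebra_simps)
  also have "\<dots> = exp z + 2 + exp (- z)"
    by (simp add: e)
  finally show ?thesis using e by (simp add: cosh_def mult.commute add_ac)
qed

lemma dsigmoid_antimono_abs:
  assumes "\<bar>z\<bar> \<le> s"
  shows "dsigmoid s \<le> dsigmoid z"
proof -
  have "cosh z \<le> cosh s"
    using assms cosh_real_nonneg_le_iff[of "\<bar>z\<bar>" s] by (metis abs_ge_zero cosh_real_abs order_trans)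
  then show ?thesis
    unfolding dsigmoid_eq_cosh using cosh_real_pos[of z]
    by (intro divide_left_mono mult_pos_pos) linarith+
qed

lemma optimistic_pair_regret:
  fixes f :: "'a \<Rightarrow> real^'d" and N :: "real^'d \<Rightarrow> real"
  assumes choice: "\<And>a' b'. (f a' + f b') \<bullet> \<theta> + \<beta> * N (f a' - f b') \<le> (f a + f b) \<bullet> \<theta> + \<beta> * N (f a - f b)"
    and N_uminus: "\<And>p. N (- p) = N p"
    and confidence: "\<And>p. p \<bullet> (\<theta>s - \<theta>) \<le> \<beta> * N p"
  shows "2 * (\<theta>s \<bullet> f s) - \<theta>s \<bullet> f a - \<theta>s \<bullet> f b \<le> 2 * \<beta> * N (f a - f b)"
proof -
  have "N (f a - f s) = N (f s - f a)"
    using N_uminus[of "f s - f a"] by simp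
  then show ?thesis
    using choice[of s b] choice[of a s] confidence[of "f s - f a"] confidence[of "f s - f b"]
    by (simp add: algebra_simps inner_diff_left inner_diff_right inner_add_left inner_commute)
qed

text \<open>Since \<open>sqrt\<close> is negative on negative reals, \<open>w t \<ge> 0\<close> needs \<open>S t\<close> to be positive
  definite, which in turn needs the earlier weights to be nonnegative.\<close>

lemma clipped_weights_nonneg:
  fixes u :: "nat \<Rightarrow> real^'d"
  assumes "lam > 0" and "\<kappa> \<ge> 0" and "\<alpha> \<ge> 0"
    and S: "\<And>t. t \<in> {1..T} \<Longrightarrow> S t = lam *\<^sub>R mat 1 + (\<Sum>i\<in>{1..<t}. (w i * \<kappa>) *\<^sub>R outer (u i))"
    and w: "\<And>t. t \<in> {1..T} \<Longrightarrow> w t =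
          (let n = mnorm (matrix_inv (S t)) (u t) in if n = 0 then 1 else min 1 (\<alpha> / n))"
  shows "t \<in> {1..T} \<Longrightarrow> 0 \<le> w t"
proof (induction t rule: less_induct)
  case (less t)
  then have "\<forall>i\<in>{1..<t}. 0 \<le> w i * \<kappa>"
    using assms(2) by auto
  then have "sym_pos_def (S t)"
    unfolding S[OF less.prems] using assms(1) by (intro regularized_gram_sym_pos_def) auto
  then have "0 \<le> mnorm (matrix_inv (S t)) (u t)"
    by (rule inner_le_mnorm_matrix_inv_mult_mnorm(2))
  then show ?case
    using w[OF less.prems] assms(3) by (auto simp: Let_def)
qed

theorem mainTheorem8:
  fixes \<phi> :: "'x \<Rightarrow> 'a \<Rightarrow> real^'d"
    and \<theta>s :: "real^'d" and B \<kappa> \<alpha> lam :: real and T :: nat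
    and x :: "nat \<Rightarrow> 'x" and a b astar :: "nat \<Rightarrow> 'a"
    and l c obs :: "nat \<Rightarrow> real"
    and \<theta> :: "nat \<Rightarrow> real^'d"
    and \<Sigma> \<Lambda> :: "nat \<Rightarrow> real^'d^'d"
    and w v \<beta> \<beta>t :: "nat \<Rightarrow> real"
  assumes phi_bound: "\<And>x a. norm (\<phi> x a) \<le> 1"
    and theta_bound: "norm \<theta>s \<le> B"
    and kappa_pos: "\<kappa> > 0"
    and kappa_low: "\<And>x a b th. norm th \<le> B \<Longrightarrow>
                      dsigmoid ((\<phi> x a - \<phi> x b) \<bullet> th) \<ge> \<kappa>"
    and alpha_pos: "\<alpha> > 0" and lambda_pos: "lam > 0"
    and beta_pos: "\<And>t. \<beta> t > 0" and betat_pos: "\<And>t. \<beta>t t > 0"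
    and astar: "\<And>t a'. t \<in> {1..T} \<Longrightarrow> \<theta>s \<bullet> \<phi> (x t) a' \<le> \<theta>s \<bullet> \<phi> (x t) (astar t)"
    and labels: "\<And>t. t \<in> {1..T} \<Longrightarrow> l t \<in> {0, 1}"
    and corrupt: "\<And>t. t \<in> {1..T} \<Longrightarrow> c t \<in> {0, 1}"
    and obs: "\<And>t. t \<in> {1..T} \<Longrightarrow> obs t = (if c t = 0 then l t else 1 - l t)"
    and Sigma_def: "\<And>t. t \<in> {1..T} \<Longrightarrow> \<Sigma> t = lam *\<^sub>R mat 1 +
          (\<Sum>i\<in>{1..<t}. (w i * \<kappa>) *\<^sub>R outer (\<phi> (x i) (a i) - \<phi> (x i) (b i)))"
    and Lambda_def: "\<And>t. t \<in> {1..T} \<Longrightarrow> \<Lambda> t = lam *\<^sub>R mat 1 +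
          (\<Sum>i\<in>{1..<t}. (w i * v i) *\<^sub>R outer (\<phi> (x i) (a i) - \<phi> (x i) (b i)))"
    and theta_solves: "\<And>t. t \<in> {1..T} \<Longrightarrow> lam *\<^sub>R \<theta> t +
          (\<Sum>i\<in>{1..<t}. (w i * (sigmoid ((\<phi> (x i) (a i) - \<phi> (x i) (b i)) \<bullet> \<theta> t) - obs i))
              *\<^sub>R (\<phi> (x i) (a i) - \<phi> (x i) (b i))) = 0"
    and choice: "\<And>t a' b'. t \<in> {1..T} \<Longrightarrow>
          (\<phi> (x t) a' + \<phi> (x t) b') \<bullet> \<theta> t
            + \<beta>t t * mnorm (matrix_inv (\<Lambda> t)) (\<phi> (x t) a' - \<phi> (x t) b')
          \<le> (\<phi> (x t) (a t) + \<phi> (x t) (b t)) \<bullet> \<theta> t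
            + \<beta>t t * mnorm (matrix_inv (\<Lambda> t)) (\<phi> (x t) (a t) - \<phi> (x t) (b t))"
    and w_def: "\<And>t. t \<in> {1..T} \<Longrightarrow> w t =
          (let n = mnorm (matrix_inv (\<Sigma> t)) (\<phi> (x t) (a t) - \<phi> (x t) (b t))
           in if n = 0 then 1 else min 1 (\<alpha> / n))"
    and v_def: "\<And>t. t \<in> {1..T} \<Longrightarrow> v t = max \<kappa> (dsigmoid
          (\<bar>(\<phi> (x t) (a t) - \<phi> (x t) (b t)) \<bullet> \<theta> t\<bar>
           + \<beta> t * mnorm (matrix_inv (\<Sigma> t)) (\<phi> (x t) (a t) - \<phi> (x t) (b t))))"
    and E1: "\<And>t. t \<in> {1..T} \<Longrightarrow> mnorm (\<Sigma> t) (\<theta>s - \<theta> t) \<le> \<beta> t"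
    and E2: "\<And>t. t \<in> {1..T} \<Longrightarrow> mnorm (\<Lambda> t) (\<theta>s - \<theta> t) \<le> \<beta>t t"
  shows "\<forall>t\<in>{1..T}.
           v t \<le> dsigmoid ((\<phi> (x t) (a t) - \<phi> (x t) (b t)) \<bullet> \<theta>s)
         \<and> 2 * (\<theta>s \<bullet> \<phi> (x t) (astar t)) - \<theta>s \<bullet> \<phi> (x t) (a t) - \<theta>s \<bullet> \<phi> (x t) (b t)
             \<le> 2 * \<beta>t t * mnorm (matrix_inv (\<Lambda> t)) (\<phi> (x t) (a t) - \<phi> (x t) (b t))"
proof
  fix t assume t: "t \<in> {1..T}"
  define u where "u i = \<phi> (x i) (a i) - \<phi> (x i) (b i)" for i
  have w_nonneg: "0 \<le> w i" if "i \<in> {1..T}" for i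
    using clipped_weights_nonneg[where T = T, OF lambda_pos _ _ Sigma_def w_def] kappa_pos alpha_pos that by simp
  have v_nonneg: "0 \<le> v i" if "i \<in> {1..T}" for i
    using v_def[OF that] kappa_pos by simp
  have past: "i \<in> {1..T}" if "i \<in> {1..<t}" for i
    using t that by simp
  have Sigma_spd: "sym_pos_def (\<Sigma> t)"
    unfolding Sigma_def[OF t] using lambda_pos kappa_pos w_nonneg past
    by (intro regularized_gram_sym_pos_def) auto
  have Lambda_spd: "sym_pos_def (\<Lambda> t)"
    unfolding Lambda_def[OF t] using lambda_pos v_nonneg w_nonneg past
    by (intro regularized_gram_sym_pos_def) (auto intro!: mult_nonneg_nonneg)
  have "\<bar>u t \<bullet> \<theta> t\<bar> + \<beta> t * mnorm (matrix_inv (\<Sigma> t)) (u t) \<ge> \<bar>u t \<bullet> \<theta>s\<bar>"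
    using ellipsoid_abs_inner_diff_le[OF Sigma_spd E1[OF t], of "u t"] by linarith
  then have "v t \<le> dsigmoid (u t \<bullet> \<theta>s)"
    using v_def[OF t] kappa_low[OF theta_bound] dsigmoid_antimono_abs by (simp add: u_def)
  moreover have "2 * (\<theta>s \<bullet> \<phi> (x t) (astar t)) - \<theta>s \<bullet> \<phi> (x t) (a t) - \<theta>s \<bullet> \<phi> (x t) (b t)
      \<le> 2 * \<beta>t t * mnorm (matrix_inv (\<Lambda> t)) (\<phi> (x t) (a t) - \<phi> (x t) (b t))"
    using choice[OF t] mnorm_uminus ellipsoid_inner_le[OF Lambda_spd E2[OF t]]
    by (rule optimistic_pair_regret)
  ultimately show "v t \<le> dsigmoid ((\<phi> (x t) (a t) - \<phi> (x t) (b t)) \<bullet> \<theta>s)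
    \<and> 2 * (\<theta>s \<bullet> \<phi> (x t) (astar t)) - \<theta>s \<bullet> \<phi> (x t) (a t) - \<theta>s \<bullet> \<phi> (x t) (b t)
      \<le> 2 * \<beta>t t * mnorm (matrix_inv (\<Lambda> t)) (\<phi> (x t) (a t) - \<phi> (x t) (b t))"
    by (simp add: u_def)
qed

end
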